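(* Let $V$ be a set with $n$ elements and let $\Gamma = \mathrm{sd}(2^V)$ be its barycentric subdivision. Let $E = \{S_1, \dots, S_k\}$ be a face of $\Gamma$, with $k \ge 0$ and $\emptyset \ne S_1 \subsetneq S_2 \subsetneq \cdots \subsetneq S_k \subseteq V$. Then $$ \ell_V(\Gamma, E, x) = d_{r_0}(x)\, A_{r_1}(x) \cdots A_{r_k}(x), $$ where $r_0 = |V \setminus S_k|$ and $r_i = |S_i \setminus S_{i-1}|$ for $1 \le i \le k$, with the conventions $S_0 = \emptyset$ and $d_0 = 1$.
   Context: For a simplicial complex $\Delta$ of dimension $d-1$, $h(\Delta, x) = \sum_{F \in \Delta} x^{|F|} (1-x)^{d-|F|}$. The $h$-polynomial of a complex is always computed with respect to that complex's own dimension; in particular $h(\{\emptyset\}, x) = 1$. Barycentric subdivision: $\mathrm{sd}(2^V)$ is the simplicial complex of chains of nonempty subsets of $V$, with carrier map $\sigma$ sending a nonempty chain to its largest element and the empty chain to $\emptyset$. For $F \subseteq V$, the restriction is $\Gamma_F = \sigma^{-1}(2^F)$, and the link is $\mathrm{lk}_{\Gamma_F}(E) = \{G \setminus E : E \subseteq G \in \Gamma_F\}$. Relative local $h$-polynomial: for a subdivision $\Gamma$ of $2^V$ with $|V| = d$ and $E \in \Gamma$, $$ \ell_V(\Gamma, E, x) = \sum_{\sigma(E) \subseteq F \subseteq V} (-1)^{d-|F|}\, h(\mathrm{lk}_{\Gamma_F}(E), x). $$ Type A: $A_m(x) = \sum_{u \in \mathfrak{S}_m} x^{\mathrm{des}(u)}$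 and $d_m(x) = \sum x^{\mathrm{exc}(u)}$ over fixed-point-free $u \in \mathfrak{S}_m$. *)

theory Defs
  imports "HOL-Computational_Algebra.Polynomial" "HOL-Combinatorics.Permutations"
begin

text \<open>Simplicial complexes are represented as sets of faces (finite sets of vertices).
  A complex of dimension d-1 has maximal face cardinality d.\<close>

definition cplx_rank :: "'v set set \<Rightarrow> nat" where
  "cplx_rank \<Delta> = Max (card ` \<Delta>)"

definition hpoly :: "'v set set \<Rightarrow> int poly" where
  "hpoly \<Delta> = (\<Sum>F\<in>\<Delta>. monom 1 (card F) * [:1, -1:] ^ (cplx_rank \<Delta> - card F))"

definition link :: "'v set set \<Rightarrow> 'v set \<Rightarrow> 'v set set" where
  "link \<Delta> E = {G - E | G. G \<in> \<Delta> \<and> E \<subseteq> G}"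

definition is_chain :: "'a set set \<Rightarrow> bool" where
  "is_chain C \<longleftrightarrow> (\<forall>A\<in>C. \<forall>B\<in>C. A \<subseteq> B \<or> B \<subseteq> A)"

text \<open>Barycentric subdivision of the simplex 2^V: chains of nonempty subsets of V.\<close>
definition sd :: "'a set \<Rightarrow> 'a set set set" where
  "sd V = {C. C \<subseteq> Pow V - {{}} \<and> is_chain C}"

definition bary_carrier :: "'a set set \<Rightarrow> 'a set" where
  "bary_carrier C = (if C = {} then {} else (THE M. M \<in> C \<and> (\<forall>A\<in>C. A \<subseteq> M)))"

definition restr :: "('v set \<Rightarrow> 'a set) \<Rightarrow> 'v set set \<Rightarrow> 'a set \<Rightarrow> 'v set set" where
  "restr \<sigma> \<Gamma> F = {G \<in> \<Gamma>. \<sigma> G \<subseteq> F}"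

definition rel_local_h :: "('v set \<Rightarrow> 'a set) \<Rightarrow> 'a set \<Rightarrow> 'v set set \<Rightarrow> 'v set \<Rightarrow> int poly" where
  "rel_local_h \<sigma> V \<Gamma> E =
     (\<Sum>F\<in>{F. \<sigma> E \<subseteq> F \<and> F \<subseteq> V}. (-1) ^ (card V - card F) * hpoly (link (restr \<sigma> \<Gamma> F) E))"

definition des :: "nat \<Rightarrow> (nat \<Rightarrow> nat) \<Rightarrow> nat" where
  "des m u = card {i \<in> {1..<m}. u i > u (Suc i)}"

definition exc :: "nat \<Rightarrow> (nat \<Rightarrow> nat) \<Rightarrow> nat" where
  "exc m u = card {i \<in> {1..m}. u i > i}"

definition eulerian_poly :: "nat \<Rightarrow> int poly" where
  "eulerian_poly m = (\<Sum>u\<in>{u. u permutes {1..m}}. monom 1 (des m u))"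

definition derange_poly :: "nat \<Rightarrow> int poly" where
  "derange_poly m = (\<Sum>u\<in>{u. u permutes {1..m} \<and> (\<forall>i\<in>{1..m}. u i \<noteq> i)}. monom 1 (exc m u))"

end

theory Submission
  imports Defs "HOL-Combinatorics.Multiset_Permutations"
begin

text \<open>The Eulerian polynomials are characterised by A_0 = 1 and the recurrence
  A_(n+1) = (1 + n x) A_n + x (1 - x) A_n'. Counting descents, counting excedances and taking the
  h-polynomial of sd(2^B) all satisfy it: in each case one inserts a new element and sums over the
  possible positions. Grouping permutations by their non-fixed points gives
  A_n = \<Sum>_{W \<subseteq> [n]} d_|W|, hence by M\<ouml>bius inversion
  d_n = \<Sum>_{W \<subseteq> [n]} (-1)^(n - |W|) A_|W|.

  The link of the chain S_1 \<subset> ... \<subset> S_k in sd(2^F) is the join of the order complexes of the open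
  intervals (S_(i-1), S_i) and of the half-open interval (S_k, F]. These are isomorphic to the
  boundary of sd(2^(S_i - S_(i-1))) and to sd(2^(F - S_k)), whose h-polynomials are A_(r_i) and
  A_|F - S_k|, and the h-polynomial is multiplicative on joins. In the alternating sum over
  S_k \<subseteq> F \<subseteq> V the factors A_(r_i) come out and what remains is d_(r_0).\<close>

section \<open>The Eulerian recurrence\<close>

abbreviation X :: "int poly" where "X \<equiv> monom 1 1"

lemma X_power_eq_monom: "X ^ k = monom 1 k"
  by (simp add: monom_altdef)

lemma pCons_one_minus_one_eq: "[:1, -1:] = 1 - X"
  by (simp add: monom_altdef one_pCons)

lemma pderiv_X_power_Suc: "pderiv (X ^ Suc k) = of_nat (Suc k) * X ^ k"
  unfolding pderiv_power_Suc by (simp add: pderiv_monom of_nat_poly)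

definition eulerian_step :: "nat \<Rightarrow> int poly \<Rightarrow> int poly" where
  "eulerian_step N p = (1 + of_nat N * X) * p + X * (1 - X) * pderiv p"

fun eulerian_rec :: "nat \<Rightarrow> int poly" where
  "eulerian_rec 0 = 1"
| "eulerian_rec (Suc n) = eulerian_step n (eulerian_rec n)"

lemma eulerian_step_sum: "eulerian_step N (sum f A) = (\<Sum>a\<in>A. eulerian_step N (f a))"
  by (induction A rule: infinite_finite_induct)
    (auto simp: eulerian_step_def pderiv_add algebra_simps)

lemma eulerian_step_X_power:
  assumes "e \<le> N"
  shows "eulerian_step N (X ^ e) = of_nat (e + 1) * X ^ e + of_nat (N - e) * X ^ (e + 1)"
proof (cases e)
  case 0
  then show ?thesis by (simp add: eulerian_step_def algebra_simps)
next
  case (Suc k)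
  have "eulerian_step N (X ^ e) = (1 + of_nat N * X) * X ^ e + X * (1 - X) * (of_nat e * X ^ k)"
    unfolding Suc eulerian_step_def pderiv_X_power_Suc ..
  also have "\<dots> = of_nat (e + 1) * X ^ e + (of_nat N - of_nat e) * X ^ (e + 1)"
    using Suc by (simp add: algebra_simps)
  finally show ?thesis using assms by (simp add: of_nat_diff)
qed

text \<open>The h-contribution of a k-element face in rank N is an eigenvector of eulerian_step N.\<close>

lemma eulerian_step_face_term:
  assumes "k \<le> N"
  shows "eulerian_step N (X ^ k * (1 - X) ^ (N - k)) = of_nat (k + 1) * (X ^ k * (1 - X) ^ (N - k))"
proof -
  obtain j where N: "N = k + j" using assms le_Suc_ex by blast
  have dX: "X * pderiv (X ^ k) = of_nat k * X ^ k"
    by (cases k) (simp_all only: pderiv_X_power_Suc, simp_all add: algebra_simps)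
  have smult_int: "smult c p = of_int c * p" for c and p :: "int poly"
    by (simp add: of_int_poly)
  have dY: "(1 - X) * pderiv ((1 - X) ^ j) = - (of_nat j * (1 - X) ^ j)"
    by (cases j) (simp_all only: pderiv_power_Suc,
        simp_all add: pderiv_diff pderiv_monom smult_int algebra_simps)
  have "eulerian_step N (X ^ k * (1 - X) ^ j) = (1 + of_nat N * X) * (X ^ k * (1 - X) ^ j)
      + (1 - X) * (1 - X) ^ j * (X * pderiv (X ^ k)) + X * X ^ k * ((1 - X) * pderiv ((1 - X) ^ j))"
    by (simp add: eulerian_step_def pderiv_mult algebra_simps)
  also have "\<dots> = of_nat (k + 1) * (X ^ k * (1 - X) ^ j)"
    unfolding dX dY N by (simp add: algebra_simps)
  finally show ?thesis using N by simp
qed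

section \<open>Excedances and derangements\<close>

definition excedances :: "'a::linorder set \<Rightarrow> ('a \<Rightarrow> 'a) \<Rightarrow> nat" where
  "excedances B u = card {i\<in>B. i < u i}"

definition excedance_poly :: "'a::linorder set \<Rightarrow> int poly" where
  "excedance_poly B = (\<Sum>u\<in>{u. u permutes B}. X ^ excedances B u)"

definition derangement_poly :: "'a::linorder set \<Rightarrow> int poly" where
  "derangement_poly B = (\<Sum>u\<in>{u. u permutes B \<and> (\<forall>i\<in>B. u i \<noteq> i)}. X ^ excedances B u)"

text \<open>Inserting a new maximum m into the cycle of q through i: the map i \<mapsto> m is a new
  excedance, m \<mapsto> q i is not, and nothing else changes.\<close>

lemma excedance_set_insert_max:
  fixes m :: "'a::linorder"
  assumes mB: "m \<notin> B" and less: "\<forall>j\<in>B. j < m" and q: "q permutes B" and iB: "i \<in> B"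
  shows "{j \<in> insert m B. j < (transpose m (q i) \<circ> q) j} = insert i {j\<in>B. j < q j}"
proof -
  have qi: "q i \<in> B" using permutes_in_image[OF q] iB by simp
  have at_m: "transpose m (q i) (q m) = q i"
    using permutes_not_in[OF q mB] by simp
  have at_i: "transpose m (q i) (q i) = m"
    by simp
  have elsewhere: "transpose m (q i) (q j) = q j" if "j \<in> B" "j \<noteq> i" for j
  proof -
    have "q j \<noteq> m" "q j \<noteq> q i"
      using that permutes_in_image[OF q] permutes_inj[OF q] mB by (auto dest: injD)
    then show ?thesis by simp
  qed
  have "i < m" "\<not> m < q i" using less iB qi by auto
  show ?thesis
  proof (rule set_eqI)
    fix j
    consider "j = m" | "j = i" | "j \<in> B" "j \<noteq> i" | "j \<notin> insert m B" using iB by blast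
    then show "j \<in> {j \<in> insert m B. j < (transpose m (q i) \<circ> q) j} \<longleftrightarrow> j \<in> insert i {j\<in>B. j < q j}"
      by cases (use \<open>i < m\<close> \<open>\<not> m < q i\<close> mB iB in \<open>auto simp: at_m at_i elsewhere\<close>)
  qed
qed

lemma sum_excedances_insert_max:
  assumes fin: "finite B" and mB: "m \<notin> B" and less: "\<forall>j\<in>B. j < m" and q: "q permutes B"
  shows "(\<Sum>b\<in>insert m B. X ^ excedances (insert m B) (transpose m b \<circ> q))
         = eulerian_step (card B) (X ^ excedances B q)"
proof -
  let ?E = "{j\<in>B. j < q j}"
  have finE: "finite ?E" using fin by auto
  have exc_le: "excedances B q \<le> card B"
    unfolding excedances_def using fin by (intro card_mono) auto
  have "excedances (insert m B) (transpose m m \<circ> q) = excedances B q"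
    unfolding excedances_def using permutes_not_in[OF q mB] by (auto intro: arg_cong[where f=card])
  moreover have "(\<Sum>b\<in>B. X ^ excedances (insert m B) (transpose m b \<circ> q))
      = of_nat (excedances B q) * X ^ excedances B q
        + of_nat (card B - excedances B q) * X ^ (excedances B q + 1)"
  proof -
    have "(\<Sum>b\<in>B. X ^ excedances (insert m B) (transpose m b \<circ> q))
        = (\<Sum>i\<in>B. X ^ excedances (insert m B) (transpose m (q i) \<circ> q))"
      by (rule sum.reindex_bij_betw[OF permutes_imp_bij[OF q], symmetric])
    also have "\<dots> = (\<Sum>i\<in>B. X ^ card (insert i ?E))"
      unfolding excedances_def using excedance_set_insert_max[OF mB less q] by simp
    also have "\<dots> = (\<Sum>i\<in>B. if i < q i then X ^ excedances B q else X ^ (excedances B q + 1))"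
      by (intro sum.cong refl) (auto simp: excedances_def finE insert_absorb)
    also have "\<dots> = of_nat (card ?E) * X ^ excedances B q
        + of_nat (card (B - ?E)) * X ^ (excedances B q + 1)"
    proof -
      have "B \<inter> {i. i < q i} = ?E" "B \<inter> - {i. i < q i} = B - ?E" by auto
      then show ?thesis using fin by (simp add: sum.If_cases)
    qed
    finally show ?thesis
      using fin by (simp add: excedances_def card_Diff_subset)
  qed
  ultimately show ?thesis
    using eulerian_step_X_power[OF exc_le] mB fin by (simp add: algebra_simps)
qed

theorem excedance_poly_eq_eulerian_rec: "finite B \<Longrightarrow> excedance_poly B = eulerian_rec (card B)"
proof (induction B rule: finite_linorder_max_induct)
  case empty
  then show ?case by (simp add: excedance_poly_def excedances_def)
next
  case (insert m B)
  have mB: "m \<notin> B" using insert.hyps(2) by blast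
  have "excedance_poly (insert m B)
      = (\<Sum>q\<in>{p. p permutes B}. \<Sum>b\<in>insert m B. X ^ excedances (insert m B) (transpose m b \<circ> q))"
    unfolding excedance_poly_def sum_over_permutations_insert[OF insert.hyps(1) mB] by (rule sum.swap)
  also have "\<dots> = eulerian_step (card B) (excedance_poly B)"
    unfolding excedance_poly_def eulerian_step_sum
    using sum_excedances_insert_max[OF insert.hyps(1) mB insert.hyps(2)] by simp
  finally show ?case using insert mB by simp
qed

text \<open>Group the permutations of A by their set of non-fixed points.\<close>

lemma excedance_poly_eq_sum_derangement_poly:
  assumes fin: "finite A"
  shows "excedance_poly A = (\<Sum>B\<in>Pow A. derangement_poly B)"
proof -
  let ?moved = "\<lambda>u. {i\<in>A. u i \<noteq> i}"
  have "excedance_poly A = (\<Sum>B\<in>Pow A. \<Sum>u\<in>{u\<in>{u. u permutes A}. ?moved u = B}. X ^ excedances A u)"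
    unfolding excedance_poly_def using fin by (intro sum.group[symmetric]) (auto simp: finite_permutations)
  also have "\<dots> = (\<Sum>B\<in>Pow A. derangement_poly B)"
  proof (intro sum.cong refl)
    fix B assume "B \<in> Pow A"
    then have BA: "B \<subseteq> A" by simp
    have "{u\<in>{u. u permutes A}. ?moved u = B} = {u. u permutes B \<and> (\<forall>i\<in>B. u i \<noteq> i)}"
    proof (intro set_eqI iffI)
      fix u assume "u \<in> {u\<in>{u. u permutes A}. ?moved u = B}"
      then have pA: "u permutes A" and moved: "?moved u = B" by auto
      have "u permutes B"
        by (rule permutes_superset[OF pA]) (use moved in auto)
      then show "u \<in> {u. u permutes B \<and> (\<forall>i\<in>B. u i \<noteq> i)}"
        using moved by auto
    next
      fix u assume "u \<in> {u. u permutes B \<and> (\<forall>i\<in>B. u i \<noteq> i)}"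
      then have pB: "u permutes B" and "\<forall>i\<in>B. u i \<noteq> i" by auto
      then have "?moved u = B"
        using BA permutes_not_in[OF pB] by auto
      then show "u \<in> {u\<in>{u. u permutes A}. ?moved u = B}"
        using permutes_subset[OF pB BA] by simp
    qed
    moreover have "excedances A u = excedances B u" if "u permutes B" for u
      unfolding excedances_def using permutes_not_in[OF that] BA
      by (intro arg_cong[where f=card]) (metis less_irrefl subsetD)
    ultimately show "(\<Sum>u\<in>{u\<in>{u. u permutes A}. ?moved u = B}. X ^ excedances A u) = derangement_poly B"
      unfolding derangement_poly_def by (intro sum.cong) auto
  qed
  finally show ?thesis .
qed

lemma sum_Pow_card_cong:
  assumes "finite Y" "finite Z" "card Y = card Z"
  shows "(\<Sum>W\<in>Pow Y. g (card W)) = (\<Sum>W\<in>Pow Z. g (card W))"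
proof -
  obtain h where h: "bij_betw h Y Z" using finite_same_card_bij[OF assms] by blast
  have "card (h ` W) = card W" if "W \<in> Pow Y" for W
    using that bij_betw_imp_inj_on[OF h] by (auto intro: card_image inj_on_subset)
  then show ?thesis
    using sum.reindex_bij_betw[OF bij_betw_Pow[OF h], of "\<lambda>W. g (card W)"] by simp
qed

theorem derange_poly_eq_alternating_sum:
  assumes "finite Y"
  shows "derange_poly (card Y) = (\<Sum>W\<in>Pow Y. (-1) ^ (card Y - card W) * eulerian_rec (card W))"
proof -
  let ?n = "card Y"
  have "derange_poly ?n = derangement_poly {1..?n}"
    unfolding derange_poly_def derangement_poly_def excedances_def exc_def X_power_eq_monom ..
  also have "\<dots> = (\<Sum>T\<in>Pow {1..?n}. (-1) ^ (card {1..?n} - card T) * excedance_poly T)"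
    by (rule inclusion_exclusion_mobius) (auto intro: excedance_poly_eq_sum_derangement_poly)
  also have "\<dots> = (\<Sum>T\<in>Pow {1..?n}. (-1) ^ (?n - card T) * eulerian_rec (card T))"
    by (intro sum.cong refl) (simp add: excedance_poly_eq_eulerian_rec finite_subset[of _ "{1..?n}"])
  also have "\<dots> = (\<Sum>W\<in>Pow Y. (-1) ^ (?n - card W) * eulerian_rec (card W))"
    using assms by (intro sum_Pow_card_cong) auto
  finally show ?thesis .
qed

section \<open>Descents of arrangements\<close>

fun descents :: "'a::linorder list \<Rightarrow> nat" where
  "descents (a # b # xs) = (if b < a then 1 else 0) + descents (b # xs)"
| "descents _ = 0"

definition descent_poly :: "'a::linorder set \<Rightarrow> int poly" where
  "descent_poly A = (\<Sum>xs\<in>permutations_of_set A. X ^ descents xs)"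

definition insert_at :: "nat \<Rightarrow> 'a \<Rightarrow> 'a list \<Rightarrow> 'a list" where
  "insert_at p m ws = take p ws @ m # drop p ws"

lemma insert_at_0 [simp]: "insert_at 0 m ws = m # ws"
  by (simp add: insert_at_def)

lemma insert_at_Suc_Cons [simp]: "insert_at (Suc p) m (b # ws) = b # insert_at p m ws"
  by (simp add: insert_at_def)

lemma descents_le_length: "descents ws \<le> length ws"
  by (induction ws rule: descents.induct) auto

lemma descents_Cons_max: "ws \<noteq> [] \<Longrightarrow> \<forall>x\<in>set ws. x < m \<Longrightarrow> descents (m # ws) = descents ws + 1"
  by (cases ws) auto

lemma sum_descents_insert_at_Cons:
  assumes "ws \<noteq> []" and am: "a < m" and less: "\<forall>x\<in>set ws. x < m"
  shows "(\<Sum>p\<le>length (a # ws). X ^ descents (insert_at p m (a # ws)))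
    = X ^ (descents (a # ws) + 1) + X ^ (descents ws + 1)
      + (if hd ws < a then X else 1) * ((\<Sum>p\<le>length ws. X ^ descents (insert_at p m ws)) - X ^ (descents ws + 1))"
proof -
  obtain b ws' where ws: "ws = b # ws'" using assms(1) by (cases ws) auto
  let ?R = "\<Sum>q\<le>length ws'. X ^ descents (insert_at (Suc q) m ws)"
  have des_m: "descents (m # ws) = descents ws + 1" "descents (m # a # ws) = descents (a # ws) + 1"
    using descents_Cons_max less am assms(1) by auto
  have "(\<Sum>p\<le>length ws. X ^ descents (insert_at p m ws)) = X ^ (descents ws + 1) + ?R"
    unfolding ws length_Cons sum.atMost_Suc_shift using des_m(1) ws by simp
  moreover have "(\<Sum>p\<le>length (a # ws). X ^ descents (insert_at p m (a # ws)))
      = X ^ (descents (a # ws) + 1) + X ^ (descents ws + 1) + (if b < a then X else 1) * ?R"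
    unfolding ws length_Cons sum.atMost_Suc_shift
    using am des_m unfolding ws by (simp add: sum_distrib_left)
  ultimately show ?thesis using ws by simp
qed

text \<open>Inserting a new maximum keeps the number of descents in the d + 1 slots at the end or inside
  a descent, and raises it by one in the remaining slots.\<close>

lemma sum_descents_insert_at_max:
  fixes m :: "'a::linorder"
  assumes "\<forall>x\<in>set ws. x < m"
  shows "(\<Sum>p\<le>length ws. X ^ descents (insert_at p m ws)) =
    (of_nat (descents ws) + 1) * X ^ descents ws
      + (of_nat (length ws) - of_nat (descents ws)) * X ^ (descents ws + 1)"
  using assms
proof (induction ws)
  case (Cons a ws)
  show ?case
  proof (cases ws)
    case Nil
    then show ?thesis using Cons.prems by (simp add: algebra_simps)
  next
    case (Cons b ws')
    have less: "a < m" "\<forall>x\<in>set ws. x < m" and "ws \<noteq> []" using Cons.prems Cons by auto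
    have "descents (a # ws) = (if b < a then 1 else 0) + descents ws" using Cons by simp
    then show ?thesis
      unfolding sum_descents_insert_at_Cons[OF \<open>ws \<noteq> []\<close> less] Cons.IH[OF less(2)] using Cons
      by (cases "b < a") (simp_all add: algebra_simps)
  qed
qed simp

lemma removeAll_insert_at: "m \<notin> set ws \<Longrightarrow> removeAll m (insert_at p m ws) = ws"
  unfolding insert_at_def by (metis append_take_drop_id in_set_dropD in_set_takeD removeAll.simps(2)
      removeAll_append removeAll_id)

lemma takeWhile_insert_at:
  "m \<notin> set ws \<Longrightarrow> p \<le> length ws \<Longrightarrow> length (takeWhile (\<lambda>x. x \<noteq> m) (insert_at p m ws)) = p"
  unfolding insert_at_def by (subst takeWhile_append2) (auto dest: in_set_takeD)

lemma mset_insert_at: "mset (insert_at p m ws) = mset (m # ws)"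
  unfolding insert_at_def by (metis append_take_drop_id mset.simps(2) mset_append union_mset_add_mset_right)

lemma bij_betw_insert_at:
  assumes "m \<notin> A"
  shows "bij_betw (\<lambda>(ws, p). insert_at p m ws)
    (SIGMA ws:permutations_of_set A. {..length ws}) (permutations_of_set (insert m A))"
proof (rule bij_betw_imageI)
  have mset: "set (insert_at p m ws) = insert m (set ws)"
    "distinct (insert_at p m ws) \<longleftrightarrow> distinct (m # ws)" for p ws
    using mset_insert_at by (metis list.set(2) mset_eq_setD, metis mset_eq_imp_distinct_iff)
  show "inj_on (\<lambda>(ws, p). insert_at p m ws) (SIGMA ws:permutations_of_set A. {..length ws})"
  proof (rule inj_onI)
    fix x y
    assume x: "x \<in> (SIGMA ws:permutations_of_set A. {..length ws})"
      and y: "y \<in> (SIGMA ws:permutations_of_set A. {..length ws})"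
      and eq: "(\<lambda>(ws, p). insert_at p m ws) x = (\<lambda>(ws, p). insert_at p m ws) y"
    obtain ws p ws' p' where xy: "x = (ws, p)" "y = (ws', p')" by fastforce
    have "m \<notin> set ws" "m \<notin> set ws'" "p \<le> length ws" "p' \<le> length ws'"
      using x y assms unfolding xy by (auto simp: permutations_of_set_def)
    then show "x = y"
      using eq removeAll_insert_at takeWhile_insert_at unfolding xy by (metis case_prod_conv)
  qed
  show "(\<lambda>(ws, p). insert_at p m ws) ` (SIGMA ws:permutations_of_set A. {..length ws})
      = permutations_of_set (insert m A)"
  proof (intro set_eqI iffI)
    fix xs assume "xs \<in> (\<lambda>(ws, p). insert_at p m ws) ` (SIGMA ws:permutations_of_set A. {..length ws})"
    then show "xs \<in> permutations_of_set (insert m A)"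
      using assms mset by (auto simp: permutations_of_set_def)
  next
    fix xs assume xs: "xs \<in> permutations_of_set (insert m A)"
    then obtain ys zs where split: "xs = ys @ m # zs"
      by (metis insertI1 permutations_of_setD(1) split_list)
    then have "ys @ zs \<in> permutations_of_set A" "xs = insert_at (length ys) m (ys @ zs)"
      using xs assms by (auto simp: permutations_of_set_def insert_at_def)
    then show "xs \<in> (\<lambda>(ws, p). insert_at p m ws) ` (SIGMA ws:permutations_of_set A. {..length ws})"
      by (intro image_eqI[where x="(ys @ zs, length ys)"]) auto
  qed
qed

theorem descent_poly_eq_eulerian_rec: "finite A \<Longrightarrow> descent_poly A = eulerian_rec (card A)"
proof (induction A rule: finite_linorder_max_induct)
  case empty
  then show ?case by (simp add: descent_poly_def)
next
  case (insert m A)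
  have mA: "m \<notin> A" using insert.hyps(2) by blast
  have "descent_poly (insert m A) = (\<Sum>(ws, p)\<in>(SIGMA ws:permutations_of_set A. {..length ws}).
      X ^ descents (insert_at p m ws))"
    unfolding descent_poly_def sum.reindex_bij_betw[OF bij_betw_insert_at[OF mA], symmetric]
    by (simp add: split_def)
  also have "\<dots> = (\<Sum>ws\<in>permutations_of_set A. \<Sum>p\<le>length ws. X ^ descents (insert_at p m ws))"
    by (rule sum.Sigma[symmetric]) auto
  also have "\<dots> = (\<Sum>ws\<in>permutations_of_set A. eulerian_step (card A) (X ^ descents ws))"
  proof (intro sum.cong refl)
    fix ws assume ws: "ws \<in> permutations_of_set A"
    have less: "\<forall>x\<in>set ws. x < m"
      using ws insert.hyps(2) by (auto simp: permutations_of_set_def)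
    have len: "length ws = card A"
      using ws length_finite_permutations_of_set by blast
    show "(\<Sum>p\<le>length ws. X ^ descents (insert_at p m ws)) = eulerian_step (card A) (X ^ descents ws)"
      using sum_descents_insert_at_max[OF less] eulerian_step_X_power[of "descents ws" "card A"]
        descents_le_length[of ws] len by (simp add: of_nat_diff)
  qed
  also have "\<dots> = eulerian_step (card A) (descent_poly A)"
    unfolding descent_poly_def eulerian_step_sum ..
  finally show ?case using insert mA by simp
qed

lemma descents_eq_sum: "descents xs = (\<Sum>i<length xs - 1. if xs ! Suc i < xs ! i then 1 else 0)"
proof (induction xs rule: descents.induct)
  case (1 a b xs)
  have "length (a # b # xs) - 1 = Suc (length (b # xs) - 1)" by simp
  then show ?case using 1 by (simp only: sum.lessThan_Suc_shift) simp
qed auto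

lemma des_eq_descents: "des m u = descents (map u [1..<Suc m])"
proof -
  have "descents (map u [1..<Suc m]) = (\<Sum>i<m - 1. if u (Suc (Suc i)) < u (Suc i) then 1 else 0)"
    unfolding descents_eq_sum by (intro sum.cong refl) (auto simp: nth_map_upt simp del: upt_Suc)
  also have "\<dots> = (\<Sum>i\<in>{1..<m}. if u (Suc i) < u i then 1 else 0)"
  proof -
    have "{1..<m} = Suc ` {..<m - 1}"
      by (cases m) (simp_all add: lessThan_atLeast0)
    then show ?thesis by (simp add: sum.reindex)
  qed
  also have "\<dots> = des m u"
    unfolding des_def by (simp add: sum.If_cases) (intro arg_cong[where f=card], auto)
  finally show ?thesis by simp
qed

lemma bij_betw_map_upt_permutes:
  "bij_betw (\<lambda>u. map u [1..<Suc m]) {u. u permutes {1..m}} (permutations_of_set {1..m})"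
proof (rule bij_betw_imageI)
  show "inj_on (\<lambda>u. map u [1..<Suc m]) {u. u permutes {1..m}}"
  proof (rule inj_onI, rule ext)
    fix u v i assume "u \<in> {u. u permutes {1..m}}" "v \<in> {u. u permutes {1..m}}"
      and "map u [1..<Suc m] = map v [1..<Suc m]"
    then show "u i = v i"
      by (cases "i \<in> {1..m}") (auto simp: permutes_not_in simp del: upt_Suc)
  qed
  show "(\<lambda>u. map u [1..<Suc m]) ` {u. u permutes {1..m}} = permutations_of_set {1..m}"
  proof (intro set_eqI iffI)
    fix xs assume "xs \<in> (\<lambda>u. map u [1..<Suc m]) ` {u. u permutes {1..m}}"
    then obtain u where u: "u permutes {1..m}" and xs: "xs = map u [1..<Suc m]" by auto
    show "xs \<in> permutations_of_set {1..m}"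
      unfolding xs permutations_of_set_def using permutes_inj_on[OF u] permutes_image[OF u]
      by (simp add: distinct_map atLeastLessThanSuc_atLeastAtMost del: upt_Suc)
  next
    fix xs assume "xs \<in> permutations_of_set {1..m}"
    then have d: "distinct xs" and s: "set xs = {1..m}" by (auto simp: permutations_of_set_def)
    have len: "length xs = m" using distinct_card[OF d] s by simp
    define u where "u i = (if i \<in> {1..m} then xs ! (i - 1) else i)" for i
    have "u ` {1..m} = (!) xs ` {..<m}"
      unfolding u_def by (force simp: image_iff intro: bexI[where x="Suc _"])
    then have "bij_betw u {1..m} {1..m}"
      using d len s by (intro bij_betw_imageI) (auto simp: inj_on_def u_def nth_eq_iff_index_eq
          set_conv_nth[of xs] image_def)
    then have "u permutes {1..m}" by (rule bij_imp_permutes) (auto simp: u_def)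
    moreover have "xs = map u [1..<Suc m]"
      by (rule nth_equalityI) (use len in \<open>auto simp: u_def nth_map_upt simp del: upt_Suc\<close>)
    ultimately show "xs \<in> (\<lambda>u. map u [1..<Suc m]) ` {u. u permutes {1..m}}" by blast
  qed
qed

theorem eulerian_poly_eq_eulerian_rec: "eulerian_poly m = eulerian_rec m"
proof -
  have "eulerian_poly m = (\<Sum>u\<in>{u. u permutes {1..m}}. X ^ descents (map u [1..<Suc m]))"
    unfolding eulerian_poly_def X_power_eq_monom des_eq_descents ..
  also have "\<dots> = descent_poly {1..m}"
    unfolding descent_poly_def using sum.reindex_bij_betw[OF bij_betw_map_upt_permutes]
    by (simp del: upt_Suc)
  finally show ?thesis using descent_poly_eq_eulerian_rec[of "{1..m}"] by simp
qed

section \<open>The h-polynomial of the barycentric subdivision\<close>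

lemma sd_memD: "C \<in> sd B \<Longrightarrow> C \<subseteq> Pow B - {{}} \<and> is_chain C"
  by (simp add: sd_def)

lemma sd_empty: "sd {} = {{}}"
  unfolding sd_def is_chain_def by auto

lemma finite_sd: "finite B \<Longrightarrow> finite (sd B)"
  unfolding sd_def by (rule finite_subset[of _ "Pow (Pow B)"]) auto

lemma finite_chain_has_greatest:
  assumes "finite L" "L \<noteq> {}" "is_chain L"
  shows "\<exists>M\<in>L. \<forall>T\<in>L. T \<subseteq> M"
  using assms
proof (induction L rule: finite_ne_induct)
  case (insert x F)
  have "is_chain F" using insert.prems unfolding is_chain_def by auto
  then obtain M where M: "M \<in> F" "\<forall>T\<in>F. T \<subseteq> M" using insert.IH by blast
  have "x \<subseteq> M \<or> M \<subseteq> x" using insert.prems M(1) unfolding is_chain_def by auto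
  then show ?case using M by auto
qed auto

text \<open>The sizes of the members of a chain of nonempty subsets of B are distinct numbers in 1..|B|.\<close>

lemma sd_face_finite_card_le:
  assumes fin: "finite B" and C: "C \<in> sd B"
  shows "finite C" and "card C \<le> card B"
proof -
  have sub: "C \<subseteq> Pow B - {{}}" and ch: "is_chain C" using sd_memD[OF C] by auto
  show finC: "finite C" using sub fin by (rule_tac finite_subset[of _ "Pow B"]) auto
  have "inj_on card C"
  proof (rule inj_onI)
    fix S T assume "S \<in> C" "T \<in> C" "card S = card T"
    moreover have "finite S" "finite T" using \<open>S \<in> C\<close> \<open>T \<in> C\<close> sub fin by (auto intro: finite_subset)
    moreover have "S \<subseteq> T \<or> T \<subseteq> S" using ch \<open>S \<in> C\<close> \<open>T \<in> C\<close> unfolding is_chain_def by blast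
    ultimately show "S = T" using card_subset_eq by metis
  qed
  moreover have "card S \<in> {1..card B}" if "S \<in> C" for S
  proof -
    have "S \<subseteq> B" "S \<noteq> {}" using that sub by auto
    moreover have "finite S" using \<open>S \<subseteq> B\<close> fin by (rule finite_subset)
    ultimately show ?thesis using fin by (simp add: Suc_le_eq card_gt_0_iff card_mono)
  qed
  then have "card ` C \<subseteq> {1..card B}" by blast
  ultimately show "card C \<le> card B"
    using card_image card_mono[of "{1..card B}" "card ` C"] by fastforce
qed

lemma ex_sd_face_card_eq:
  assumes "finite B" shows "\<exists>C\<in>sd B. card C = card B"
  using assms
proof (induction B rule: finite_induct)
  case empty
  show ?case by (simp add: sd_empty)
next
  case (insert a B)
  then obtain C where C: "C \<in> sd B" "card C = card B" by blast
  have "insert (insert a B) C \<in> sd (insert a B)"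
    using sd_memD[OF C(1)] unfolding sd_def is_chain_def by auto
  moreover have "insert a B \<notin> C"
    using sd_memD[OF C(1)] insert(2) by auto
  then have "card (insert (insert a B) C) = card (insert a B)"
    using sd_face_finite_card_le(1)[OF insert(1) C(1)] C(2) insert by simp
  ultimately show ?case by blast
qed

lemma cplx_rank_sd:
  assumes "finite B" shows "cplx_rank (sd B) = card B"
  unfolding cplx_rank_def
proof (rule Max_eqI)
  show "finite (card ` sd B)" using finite_sd[OF assms] by simp
  show "k \<le> card B" if "k \<in> card ` sd B" for k
    using that sd_face_finite_card_le(2)[OF assms] by blast
  show "card B \<in> card ` sd B"
    using ex_sd_face_card_eq[OF assms] by (metis image_eqI)
qed

definition hsum :: "nat \<Rightarrow> 'v set set \<Rightarrow> int poly" where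
  "hsum r \<Delta> = (\<Sum>F\<in>\<Delta>. X ^ card F * (1 - X) ^ (r - card F))"

lemma hpoly_eq_hsum: "hpoly \<Delta> = hsum (cplx_rank \<Delta>) \<Delta>"
  unfolding hpoly_def hsum_def X_power_eq_monom pCons_one_minus_one_eq ..

text \<open>A chain of subsets of insert a B is recovered from the chain C of its traces on B, the
  largest member U of C that lies below the point where a enters, and whether insert a U itself
  belongs to the chain; there are |C| + 1 choices for U.\<close>

definition lift_chain :: "'a \<Rightarrow> 'a set set \<times> 'a set \<times> bool \<Rightarrow> 'a set set" where
  "lift_chain a = (\<lambda>(C, U, e).
     {T\<in>C. T \<subseteq> U} \<union> insert a ` {T\<in>C. \<not> T \<subseteq> U} \<union> (if e then {insert a U} else {}))"

definition lower_chain :: "'a \<Rightarrow> 'a set set \<Rightarrow> 'a set set \<times> 'a set \<times> bool" where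
  "lower_chain a C = ((\<lambda>T. T - {a}) ` C - {{}}, \<Union>{T\<in>C. a \<notin> T}, insert a (\<Union>{T\<in>C. a \<notin> T}) \<in> C)"

definition lift_domain :: "'a set \<Rightarrow> ('a set set \<times> 'a set \<times> bool) set" where
  "lift_domain B = (SIGMA C:sd B. insert {} C \<times> UNIV)"

lemma lift_chain_in_sd:
  assumes C: "C \<in> sd B" and U: "U \<in> insert {} C"
  shows "lift_chain a (C, U, e) \<in> sd (insert a B)"
proof -
  have sub: "C \<subseteq> Pow B - {{}}" and ch: "is_chain C" using sd_memD[OF C] by auto
  have below: "U \<subseteq> T" if "T \<in> C" "\<not> T \<subseteq> U" for T
    using that U ch unfolding is_chain_def by auto
  have "lift_chain a (C, U, e) \<subseteq> Pow (insert a B) - {{}}"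
    using sub U unfolding lift_chain_def by auto
  moreover have "is_chain (lift_chain a (C, U, e))"
    unfolding is_chain_def
  proof (intro ballI)
    fix S1 S2 assume "S1 \<in> lift_chain a (C, U, e)" "S2 \<in> lift_chain a (C, U, e)"
    moreover have "T1 \<subseteq> T2 \<or> T2 \<subseteq> T1" if "T1 \<in> C" "T2 \<in> C" for T1 T2
      using ch that unfolding is_chain_def by blast
    ultimately show "S1 \<subseteq> S2 \<or> S2 \<subseteq> S1"
      using below unfolding lift_chain_def by (auto split: if_splits) blast+
  qed
  ultimately show ?thesis unfolding sd_def by simp
qed

lemma lower_lift_chain:
  assumes aB: "a \<notin> B" and C: "C \<in> sd B" and U: "U \<in> insert {} C"
  shows "lower_chain a (lift_chain a (C, U, e)) = (C, U, e)"
proof -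
  have sub: "C \<subseteq> Pow B - {{}}" using sd_memD[OF C] by auto
  then have aT: "\<forall>T\<in>C. a \<notin> T" and aU: "a \<notin> U" using aB U by auto
  let ?L = "lift_chain a (C, U, e)"
  have "(\<lambda>T. T - {a}) ` ?L = C \<union> (if e then {U} else {})"
    unfolding lift_chain_def using aT aU by (auto simp: image_Un image_image)
  then have "(\<lambda>T. T - {a}) ` ?L - {{}} = C" using U sub by auto
  moreover have "\<Union>{T\<in>?L. a \<notin> T} = U"
    using aT U unfolding lift_chain_def by auto
  moreover have "insert a U \<notin> insert a ` {T\<in>C. \<not> T \<subseteq> U}"
  proof
    assume "insert a U \<in> insert a ` {T\<in>C. \<not> T \<subseteq> U}"
    then obtain T where "T \<in> C" "\<not> T \<subseteq> U" "insert a U = insert a T" by auto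
    moreover from this aT aU have "U = T" by (metis Diff_insert_absorb)
    ultimately show False by simp
  qed
  then have "insert a U \<in> ?L \<longleftrightarrow> e"
    using aT unfolding lift_chain_def by auto
  ultimately show ?thesis unfolding lower_chain_def by simp
qed

lemma union_of_members_avoiding:
  fixes a :: 'a
  assumes "finite C" "is_chain C"
  defines "U \<equiv> \<Union>{T\<in>C. a \<notin> T}"
  shows "U = {} \<or> U \<in> C" and "T \<in> C \<Longrightarrow> a \<in> T \<Longrightarrow> U \<subseteq> T - {a}"
proof -
  show "U = {} \<or> U \<in> C"
  proof (cases "{T\<in>C. a \<notin> T} = {}")
    case False
    moreover have "is_chain {T\<in>C. a \<notin> T}" using assms(2) unfolding is_chain_def by auto
    ultimately obtain M where "M \<in> C" "a \<notin> M" "\<forall>T\<in>{T\<in>C. a \<notin> T}. T \<subseteq> M"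
      using finite_chain_has_greatest[of "{T\<in>C. a \<notin> T}"] assms(1) by auto
    then have "U = M" unfolding U_def by auto
    then show ?thesis using \<open>M \<in> C\<close> by simp
  qed (auto simp: U_def)
  show "U \<subseteq> T - {a}" if "T \<in> C" "a \<in> T"
    using that assms(2) unfolding U_def is_chain_def by blast
qed

lemma lower_chain_in_lift_domain:
  assumes fin: "finite B" and C: "C \<in> sd (insert a B)"
  shows "lower_chain a C \<in> lift_domain B"
proof -
  have sub: "C \<subseteq> Pow (insert a B) - {{}}" and ch: "is_chain C" using sd_memD[OF C] by auto
  have finC: "finite C" using sd_face_finite_card_le(1) C fin by blast
  have "(\<lambda>T. T - {a}) ` C - {{}} \<in> sd B"
    using sub ch unfolding sd_def is_chain_def by auto
  moreover have "\<Union>{T\<in>C. a \<notin> T} \<in> insert {} ((\<lambda>T. T - {a}) ` C - {{}})"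
    using union_of_members_avoiding(1)[OF finC ch, of a] by (auto intro: image_eqI[where x="\<Union>_"])
  ultimately show ?thesis unfolding lower_chain_def lift_domain_def by simp
qed

lemma traces_below_entry:
  fixes a :: 'a
  assumes fin: "finite C" and ch: "is_chain C" and ne: "{} \<notin> C"
  defines "U \<equiv> \<Union>{T\<in>C. a \<notin> T}"
  shows "{T \<in> (\<lambda>T. T - {a}) ` C - {{}}. T \<subseteq> U} = {T\<in>C. a \<notin> T}"
proof (intro set_eqI iffI)
  fix T' assume "T' \<in> {T \<in> (\<lambda>T. T - {a}) ` C - {{}}. T \<subseteq> U}"
  then obtain T where T: "T \<in> C" "T' = T - {a}" "T' \<noteq> {}" "T' \<subseteq> U" by auto
  show "T' \<in> {T\<in>C. a \<notin> T}"
  proof (cases "a \<in> T")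
    case True
    then have "T' = U" using union_of_members_avoiding(2)[OF fin ch T(1)] T unfolding U_def by blast
    then show ?thesis using union_of_members_avoiding(1)[OF fin ch, of a] T(3) unfolding U_def by auto
  qed (use T in auto)
next
  fix T assume "T \<in> {T\<in>C. a \<notin> T}"
  then show "T \<in> {T \<in> (\<lambda>T. T - {a}) ` C - {{}}. T \<subseteq> U}"
    using ne unfolding U_def by (auto intro: image_eqI[where x=T])
qed

lemma traces_above_entry:
  fixes a :: 'a
  assumes fin: "finite C" and ch: "is_chain C"
  defines "U \<equiv> \<Union>{T\<in>C. a \<notin> T}"
  shows "insert a ` {T \<in> (\<lambda>T. T - {a}) ` C - {{}}. \<not> T \<subseteq> U} = {T\<in>C. a \<in> T \<and> T \<noteq> insert a U}"
proof (intro set_eqI iffI)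
  fix S assume "S \<in> insert a ` {T \<in> (\<lambda>T. T - {a}) ` C - {{}}. \<not> T \<subseteq> U}"
  then obtain T where T: "T \<in> C" "\<not> T - {a} \<subseteq> U" "S = insert a (T - {a})" by auto
  then have "a \<in> T" unfolding U_def by blast
  then have "S = T" using T(3) by blast
  then show "S \<in> {T\<in>C. a \<in> T \<and> T \<noteq> insert a U}" using T \<open>a \<in> T\<close> by auto
next
  fix S assume S: "S \<in> {T\<in>C. a \<in> T \<and> T \<noteq> insert a U}"
  then have "\<not> S - {a} \<subseteq> U"
    using union_of_members_avoiding(2)[OF fin ch, of S a] unfolding U_def by blast
  moreover have "S = insert a (S - {a})" using S by blast
  ultimately show "S \<in> insert a ` {T \<in> (\<lambda>T. T - {a}) ` C - {{}}. \<not> T \<subseteq> U}"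
    using S by (auto intro: image_eqI[where x="S - {a}"])
qed

lemma lift_lower_chain:
  assumes fin: "finite B" and C: "C \<in> sd (insert a B)"
  shows "lift_chain a (lower_chain a C) = C"
proof -
  have ne: "{} \<notin> C" and ch: "is_chain C" using sd_memD[OF C] by auto
  have finC: "finite C" using sd_face_finite_card_le(1) C fin by blast
  show ?thesis
    unfolding lower_chain_def lift_chain_def
    using traces_below_entry[OF finC ch ne, of a] traces_above_entry[OF finC ch, of a] by auto
qed

lemma card_lift_chain:
  assumes aB: "a \<notin> B" and fin: "finite B" and C: "C \<in> sd B" and U: "U \<in> insert {} C"
  shows "card (lift_chain a (C, U, e)) = card C + (if e then 1 else 0)"
proof -
  have sub: "C \<subseteq> Pow B - {{}}" using sd_memD[OF C] by auto
  then have aT: "\<forall>T\<in>C. a \<notin> T" and aU: "a \<notin> U" using aB U by auto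
  have finC: "finite C" using sd_face_finite_card_le(1)[OF fin C] .
  let ?L = "{T\<in>C. T \<subseteq> U}" and ?R = "{T\<in>C. \<not> T \<subseteq> U}"
  have "inj_on (insert a) ?R"
    using aT by (intro inj_onI) (metis Diff_insert_absorb mem_Collect_eq)
  then have "card (?L \<union> insert a ` ?R) = card ?L + card ?R"
    using aT finC by (subst card_Un_disjoint) (auto simp: card_image)
  also have "\<dots> = card C"
    using finC by (subst card_Un_disjoint[symmetric]) (auto intro: arg_cong[where f=card])
  finally have "card (?L \<union> insert a ` ?R) = card C" .
  moreover have "insert a U \<notin> ?L \<union> insert a ` ?R"
  proof
    assume "insert a U \<in> ?L \<union> insert a ` ?R"
    then obtain T where "T \<in> C" "\<not> T \<subseteq> U" "insert a U = insert a T" using aT by auto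
    moreover from this aT aU have "U = T" by (metis Diff_insert_absorb)
    ultimately show False by simp
  qed
  ultimately show ?thesis
    using finC unfolding lift_chain_def by auto
qed

lemma bij_betw_lift_chain:
  assumes aB: "a \<notin> B" and fin: "finite B"
  shows "bij_betw (lift_chain a) (lift_domain B) (sd (insert a B))"
proof (rule bij_betwI[where g="lower_chain a"])
  show "lift_chain a \<in> lift_domain B \<rightarrow> sd (insert a B)"
    using lift_chain_in_sd[where B=B and a=a] by (auto simp: lift_domain_def)
  show "lower_chain a \<in> sd (insert a B) \<rightarrow> lift_domain B"
    using lower_chain_in_lift_domain[OF fin] by blast
  show "lower_chain a (lift_chain a x) = x" if "x \<in> lift_domain B" for x
    using that lower_lift_chain[OF aB] by (auto simp: lift_domain_def)
  show "lift_chain a (lower_chain a C) = C" if "C \<in> sd (insert a B)" for C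
    using lift_lower_chain[OF fin that] .
qed

lemma sum_sd_insert:
  fixes g :: "nat \<Rightarrow> 'b::comm_ring_1"
  assumes aB: "a \<notin> B" and fin: "finite B"
  shows "(\<Sum>C\<in>sd (insert a B). g (card C))
    = (\<Sum>C\<in>sd B. of_nat (card C + 1) * (g (card C) + g (card C + 1)))"
proof -
  have "(\<Sum>C\<in>sd (insert a B). g (card C)) = (\<Sum>x\<in>lift_domain B. g (card (lift_chain a x)))"
    using sum.reindex_bij_betw[OF bij_betw_lift_chain[OF aB fin], of "\<lambda>C. g (card C)"] by simp
  also have "\<dots> = (\<Sum>C\<in>sd B. \<Sum>x\<in>insert {} C \<times> UNIV. g (card (lift_chain a (C, x))))"
    unfolding lift_domain_def using sd_face_finite_card_le(1)[OF fin]
    by (subst sum.Sigma[OF finite_sd[OF fin]]) (auto simp: split_def)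
  also have "\<dots> = (\<Sum>C\<in>sd B. \<Sum>U\<in>insert {} C. \<Sum>e\<in>UNIV. g (card (lift_chain a (C, U, e))))"
    by (simp add: sum.cartesian_product split_def)
  also have "\<dots> = (\<Sum>C\<in>sd B. of_nat (card C + 1) * (g (card C) + g (card C + 1)))"
  proof (intro sum.cong refl)
    fix C assume C: "C \<in> sd B"
    have "{} \<notin> C" "finite C" using sd_memD[OF C] sd_face_finite_card_le(1)[OF fin C] by auto
    then show "(\<Sum>U\<in>insert {} C. \<Sum>e\<in>UNIV. g (card (lift_chain a (C, U, e))))
        = of_nat (card C + 1) * (g (card C) + g (card C + 1))"
      using card_lift_chain[OF aB fin C] by (simp add: UNIV_bool add.commute)
  qed
  finally show ?thesis .
qed

text \<open>Summing the h-contributions of the 2(|C| + 1) lifts of C gives the eigenvector relation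
  of the face term, so h(sd B) obeys the Eulerian recurrence.\<close>

theorem hpoly_sd: "finite B \<Longrightarrow> hpoly (sd B) = eulerian_rec (card B)"
  unfolding hpoly_eq_hsum
proof (induction B rule: finite_induct)
  case empty
  show ?case by (simp add: hsum_def sd_empty cplx_rank_def)
next
  case (insert a B)
  let ?N = "card B"
  have "hsum (cplx_rank (sd (insert a B))) (sd (insert a B))
      = (\<Sum>C\<in>sd (insert a B). (\<lambda>k. X ^ k * (1 - X) ^ (Suc ?N - k)) (card C))"
    using insert by (simp add: hsum_def cplx_rank_sd)
  also have "\<dots> = (\<Sum>C\<in>sd B. of_nat (card C + 1) * (X ^ card C * (1 - X) ^ (Suc ?N - card C)
       + X ^ (card C + 1) * (1 - X) ^ (Suc ?N - (card C + 1))))"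
    by (rule sum_sd_insert[OF insert(2,1)])
  also have "\<dots> = (\<Sum>C\<in>sd B. eulerian_step ?N (X ^ card C * (1 - X) ^ (?N - card C)))"
  proof (intro sum.cong refl)
    fix C assume "C \<in> sd B"
    then have le: "card C \<le> ?N" using sd_face_finite_card_le(2)[OF insert(1)] by blast
    then have "Suc ?N - card C = Suc (?N - card C)" by simp
    then show "of_nat (card C + 1) * (X ^ card C * (1 - X) ^ (Suc ?N - card C)
        + X ^ (card C + 1) * (1 - X) ^ (Suc ?N - (card C + 1)))
        = eulerian_step ?N (X ^ card C * (1 - X) ^ (?N - card C))"
      using eulerian_step_face_term[OF le] by (simp add: algebra_simps)
  qed
  also have "\<dots> = eulerian_rec (card (insert a B))"
    using insert by (simp add: hsum_def eulerian_step_sum[symmetric] cplx_rank_sd)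
  finally show ?case .
qed

definition order_complex :: "'a set set \<Rightarrow> 'a set set set" where
  "order_complex \<T> = {D. D \<subseteq> \<T> \<and> is_chain D}"

lemma sd_eq_order_complex: "sd B = order_complex (Pow B - {{}})"
  unfolding sd_def order_complex_def ..

lemma empty_in_order_complex: "{} \<in> order_complex \<T>"
  unfolding order_complex_def is_chain_def by simp

lemma Union_order_complex: "\<Union>(order_complex \<T>) = \<T>"
  unfolding order_complex_def is_chain_def by blast

lemma finite_order_complex: "finite \<T> \<Longrightarrow> finite (order_complex \<T>)"
  unfolding order_complex_def by (rule finite_subset[of _ "Pow \<T>"]) auto

lemma hpoly_cplx_rank_bij_betw:
  assumes "bij_betw g \<Delta> \<Delta>'" and "\<And>F. F \<in> \<Delta> \<Longrightarrow> card (g F) = card F"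
  shows "hpoly \<Delta>' = hpoly \<Delta>" and "cplx_rank \<Delta>' = cplx_rank \<Delta>"
proof -
  have image: "\<Delta>' = g ` \<Delta>" using assms(1) by (simp add: bij_betw_def)
  have "card ` \<Delta>' = (\<lambda>F. card (g F)) ` \<Delta>"
    unfolding image image_image ..
  also have "\<dots> = card ` \<Delta>"
    using assms(2) by (rule image_cong[OF refl])
  finally have "card ` \<Delta>' = card ` \<Delta>" .
  then show rank: "cplx_rank \<Delta>' = cplx_rank \<Delta>" unfolding cplx_rank_def by simp
  show "hpoly \<Delta>' = hpoly \<Delta>"
    unfolding hpoly_eq_hsum hsum_def rank sum.reindex_bij_betw[OF assms(1), symmetric]
    using assms(2) by simp
qed

lemma image_in_order_complex:
  assumes "f ` \<S> \<subseteq> \<T>" and mono: "\<And>S S'. S \<in> \<S> \<Longrightarrow> S' \<in> \<S> \<Longrightarrow> S \<subseteq> S' \<Longrightarrow> f S \<subseteq> f S'"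
    and D: "D \<in> order_complex \<S>"
  shows "f ` D \<in> order_complex \<T>"
proof -
  have "D \<subseteq> \<S>" and chain: "is_chain D" using D by (auto simp: order_complex_def)
  then have "f ` D \<subseteq> \<T>" using assms(1) by blast
  moreover have "f S \<subseteq> f S' \<or> f S' \<subseteq> f S" if "S \<in> D" "S' \<in> D" for S S'
    using chain that mono \<open>D \<subseteq> \<S>\<close> unfolding is_chain_def by (meson subsetD)
  then have "is_chain (f ` D)" unfolding is_chain_def by blast
  ultimately show ?thesis by (simp add: order_complex_def)
qed

lemma order_complex_order_iso:
  assumes bij: "bij_betw f \<S> \<T>" and mono: "\<And>S S'. S \<in> \<S> \<Longrightarrow> S' \<in> \<S> \<Longrightarrow> f S \<subseteq> f S' \<longleftrightarrow> S \<subseteq> S'"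
  shows "hpoly (order_complex \<T>) = hpoly (order_complex \<S>)"
    and "cplx_rank (order_complex \<T>) = cplx_rank (order_complex \<S>)"
proof -
  let ?g = "inv_into \<S> f"
  have inj: "inj_on f \<S>" and f_\<S>: "f ` \<S> = \<T>" using bij by (auto simp: bij_betw_def)
  have g_\<T>: "?g ` \<T> \<subseteq> \<S>" using bij_betw_inv_into[OF bij] by (simp add: bij_betw_def)
  have f_g: "f (?g T) = T" if "T \<in> \<T>" for T using that f_\<S> by (simp add: f_inv_into_f)
  have g_mono: "?g T \<subseteq> ?g T'" if "T \<in> \<T>" "T' \<in> \<T>" "T \<subseteq> T'" for T T'
    using mono[of "?g T" "?g T'"] that g_\<T> f_g by auto
  have "image f ` order_complex \<S> = order_complex \<T>"
  proof (intro equalityI subsetI)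
    fix D assume "D \<in> image f ` order_complex \<S>"
    then show "D \<in> order_complex \<T>"
      using image_in_order_complex[of f \<S> \<T>] f_\<S> mono by blast
  next
    fix D assume D: "D \<in> order_complex \<T>"
    then have "D \<subseteq> \<T>" by (simp add: order_complex_def)
    then have "f ` ?g ` D = D" unfolding image_image using f_g by (simp add: subset_iff cong: image_cong)
    moreover have "?g ` D \<in> order_complex \<S>"
      using image_in_order_complex[OF g_\<T> g_mono D] .
    ultimately show "D \<in> image f ` order_complex \<S>" by (metis imageI)
  qed
  moreover have "inj_on (image f) (order_complex \<S>)"
    using inj_on_image_Pow[OF inj] unfolding order_complex_def by (auto intro: inj_on_subset)
  ultimately have bij_image: "bij_betw (image f) (order_complex \<S>) (order_complex \<T>)"
    by (simp add: bij_betw_def)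
  have "card (f ` D) = card D" if "D \<in> order_complex \<S>" for D
    using that inj unfolding order_complex_def by (auto intro: card_image inj_on_subset)
  then show "hpoly (order_complex \<T>) = hpoly (order_complex \<S>)"
    and "cplx_rank (order_complex \<T>) = cplx_rank (order_complex \<S>)"
    using hpoly_cplx_rank_bij_betw[OF bij_image] by simp_all
qed

lemma sd_eq_proper_part_union:
  assumes "B \<noteq> {}"
  shows "sd B = order_complex (Pow B - {{}, B}) \<union> insert B ` order_complex (Pow B - {{}, B})"
proof (intro set_eqI iffI)
  fix C assume C: "C \<in> sd B"
  then have "C - {B} \<in> order_complex (Pow B - {{}, B})"
    unfolding sd_def order_complex_def is_chain_def by auto
  then show "C \<in> order_complex (Pow B - {{}, B}) \<union> insert B ` order_complex (Pow B - {{}, B})"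
    by (cases "B \<in> C") (auto intro: image_eqI[where x="C - {B}"])
next
  fix C assume "C \<in> order_complex (Pow B - {{}, B}) \<union> insert B ` order_complex (Pow B - {{}, B})"
  then show "C \<in> sd B"
    using assms unfolding sd_def order_complex_def is_chain_def by auto
qed

lemma cplx_rank_sd_proper_part:
  assumes fin: "finite B" and ne: "B \<noteq> {}"
  shows "cplx_rank (order_complex (Pow B - {{}, B})) = card B - 1"
  unfolding cplx_rank_def
proof (rule Max_eqI)
  let ?A = "order_complex (Pow B - {{}, B})"
  show "finite (card ` ?A)" using fin by (simp add: finite_order_complex)
  have sd: "C \<in> sd B" "insert B C \<in> sd B" if "C \<in> ?A" for C
    using that sd_eq_proper_part_union[OF ne] by auto
  show "k \<le> card B - 1" if "k \<in> card ` ?A" for k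
  proof -
    obtain C where C: "C \<in> ?A" "k = card C" using \<open>k \<in> card ` ?A\<close> by blast
    then have "B \<notin> C" unfolding order_complex_def by auto
    then show ?thesis using sd_face_finite_card_le[OF fin sd(2)[OF C(1)]] C(2) by simp
  qed
  obtain C where C: "C \<in> sd B" "card C = card B" using ex_sd_face_card_eq[OF fin] by blast
  have "C - {B} \<in> ?A" using C(1) unfolding sd_def order_complex_def is_chain_def by auto
  moreover have "card (C - {B}) = card B - 1"
    using sd_face_finite_card_le(2)[OF fin sd(2)[OF calculation]] sd_face_finite_card_le(1)[OF fin C(1)] C(2)
    by (simp add: card_Diff_singleton_if card_insert_if split: if_splits)
  ultimately show "card B - 1 \<in> card ` ?A" by (metis image_eqI)
qed

text \<open>Splitting the chains of sd B according to whether they contain B pairs the faces of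
  the proper part with their cones, and the two h-contributions add up to one of rank |B| - 1.\<close>

lemma hpoly_sd_proper_part:
  assumes fin: "finite B" and ne: "B \<noteq> {}"
  shows "hpoly (order_complex (Pow B - {{}, B})) = eulerian_rec (card B)"
proof -
  let ?A = "order_complex (Pow B - {{}, B})" and ?n = "card B"
  let ?term = "\<lambda>r C. X ^ card C * (1 - X) ^ (r - card C)"
  have finA: "finite ?A" using fin by (simp add: finite_order_complex)
  have notB: "B \<notin> C" and finC: "finite C" if "C \<in> ?A" for C
    using that fin unfolding order_complex_def by (auto intro: finite_subset[of _ "Pow B"])
  have le: "card C \<le> ?n - 1" if "C \<in> ?A" for C
  proof -
    have "card C \<le> cplx_rank ?A" unfolding cplx_rank_def using that finA by simp
    then show ?thesis using cplx_rank_sd_proper_part[OF fin ne] by simp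
  qed
  have "inj_on (insert B) ?A" using notB by (intro inj_onI) (metis Diff_insert_absorb)
  then have "hsum ?n (insert B ` ?A) = (\<Sum>C\<in>?A. X ^ (card C + 1) * (1 - X) ^ (?n - (card C + 1)))"
    unfolding hsum_def using notB finC by (simp add: sum.reindex)
  moreover have "hsum ?n (sd B) = hsum ?n ?A + hsum ?n (insert B ` ?A)"
    unfolding hsum_def sd_eq_proper_part_union[OF ne] using finA notB
    by (intro sum.union_disjoint) auto
  ultimately have "hsum ?n (sd B) = (\<Sum>C\<in>?A. ?term ?n C + X ^ (card C + 1) * (1 - X) ^ (?n - (card C + 1)))"
    unfolding hsum_def by (simp add: sum.distrib)
  also have "\<dots> = hsum (?n - 1) ?A"
    unfolding hsum_def
  proof (intro sum.cong refl)
    fix C assume "C \<in> ?A"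
    moreover have "0 < ?n" using fin ne by (simp add: card_gt_0_iff)
    ultimately have "?n - card C = Suc (?n - 1 - card C)"
      using le by fastforce
    then show "?term ?n C + X ^ (card C + 1) * (1 - X) ^ (?n - (card C + 1)) = ?term (?n - 1) C"
      by (simp add: algebra_simps)
  qed
  finally show ?thesis
    using hpoly_sd[OF fin] cplx_rank_sd_proper_part[OF fin ne]
    unfolding hpoly_eq_hsum cplx_rank_sd[OF fin] by simp
qed

lemma order_iso_Diff:
  assumes "\<S> \<subseteq> {T. P \<subseteq> T}"
  shows "bij_betw (\<lambda>T. T - P) \<S> ((\<lambda>T. T - P) ` \<S>)"
    and "S \<in> \<S> \<Longrightarrow> S' \<in> \<S> \<Longrightarrow> S - P \<subseteq> S' - P \<longleftrightarrow> S \<subseteq> S'"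
  using assms by (auto simp: bij_betw_def inj_on_def)

lemma interval_chains:
  assumes "P \<subseteq> Q" "finite Q"
  shows "hpoly (order_complex {T. P \<subset> T \<and> T \<subseteq> Q}) = eulerian_rec (card (Q - P))"
    and "cplx_rank (order_complex {T. P \<subset> T \<and> T \<subseteq> Q}) = card (Q - P)"
proof -
  let ?\<T> = "{T. P \<subset> T \<and> T \<subseteq> Q}"
  have sub: "?\<T> \<subseteq> {T. P \<subseteq> T}" by auto
  have "(\<lambda>T. T - P) ` ?\<T> = Pow (Q - P) - {{}}"
    using assms(1) by (auto intro!: image_eqI[where x="_ \<union> P"])
  then show "hpoly (order_complex ?\<T>) = eulerian_rec (card (Q - P))"
    and "cplx_rank (order_complex ?\<T>) = card (Q - P)"
    using order_complex_order_iso[OF order_iso_Diff[OF sub]] assms(2)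
    by (simp_all add: sd_eq_order_complex[symmetric] hpoly_sd cplx_rank_sd)
qed

lemma open_interval_chains:
  assumes "P \<subset> Q" "finite Q"
  shows "hpoly (order_complex {T. P \<subset> T \<and> T \<subset> Q}) = eulerian_rec (card (Q - P))"
    and "cplx_rank (order_complex {T. P \<subset> T \<and> T \<subset> Q}) = card (Q - P) - 1"
proof -
  let ?\<T> = "{T. P \<subset> T \<and> T \<subset> Q}"
  have sub: "?\<T> \<subseteq> {T. P \<subseteq> T}" by auto
  have "(\<lambda>T. T - P) ` ?\<T> = Pow (Q - P) - {{}, Q - P}"
    using assms(1) by (auto intro!: image_eqI[where x="_ \<union> P"])
  moreover have "Q - P \<noteq> {}" using assms(1) by blast
  ultimately show "hpoly (order_complex ?\<T>) = eulerian_rec (card (Q - P))"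
    and "cplx_rank (order_complex ?\<T>) = card (Q - P) - 1"
    using order_complex_order_iso[OF order_iso_Diff[OF sub]] assms(2)
    by (simp_all add: hpoly_sd_proper_part cplx_rank_sd_proper_part)
qed

definition cplx_join :: "'i set \<Rightarrow> ('i \<Rightarrow> 'v set set) \<Rightarrow> 'v set set" where
  "cplx_join J \<Delta> = (\<lambda>p. \<Union>j\<in>J. p j) ` PiE J \<Delta>"

context
  fixes J :: "'i set" and \<Delta> :: "'i \<Rightarrow> 'v set set"
  assumes finite_index: "finite J"
    and finite_cplx: "\<And>j. j \<in> J \<Longrightarrow> finite (\<Delta> j)"
    and nonempty_cplx: "\<And>j. j \<in> J \<Longrightarrow> \<Delta> j \<noteq> {}"
    and finite_faces: "\<And>j F. j \<in> J \<Longrightarrow> F \<in> \<Delta> j \<Longrightarrow> finite F"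
    and disjoint_vertices: "disjoint_family_on (\<lambda>j. \<Union>(\<Delta> j)) J"
begin

lemma PiE_faces_disjoint:
  assumes "p \<in> PiE J \<Delta>" "i \<in> J" "j \<in> J" "i \<noteq> j"
  shows "p i \<inter> p j = {}"
proof -
  have "p i \<subseteq> \<Union>(\<Delta> i)" "p j \<subseteq> \<Union>(\<Delta> j)" using assms(1-3) by (auto simp: PiE_iff)
  moreover have "\<Union>(\<Delta> i) \<inter> \<Union>(\<Delta> j) = {}"
    using disjoint_vertices assms(2-4) unfolding disjoint_family_on_def by simp
  ultimately show ?thesis by blast
qed

lemma union_PiE_Int_vertices:
  assumes p: "p \<in> PiE J \<Delta>" and j: "j \<in> J"
  shows "(\<Union>i\<in>J. p i) \<inter> \<Union>(\<Delta> j) = p j"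
proof (intro equalityI subsetI)
  fix F assume "F \<in> (\<Union>i\<in>J. p i) \<inter> \<Union>(\<Delta> j)"
  then obtain i where i: "i \<in> J" "F \<in> p i" and "F \<in> \<Union>(\<Delta> j)" by blast
  moreover have "\<Union>(\<Delta> i) \<inter> \<Union>(\<Delta> j) = {}" if "i \<noteq> j"
    using disjoint_vertices i(1) j that unfolding disjoint_family_on_def by simp
  moreover have "p i \<subseteq> \<Union>(\<Delta> i)" using p i(1) by (auto simp: PiE_iff)
  ultimately show "F \<in> p j" by (cases "i = j") auto
next
  fix F assume "F \<in> p j"
  then show "F \<in> (\<Union>i\<in>J. p i) \<inter> \<Union>(\<Delta> j)" using p j by (auto simp: PiE_iff)
qed

lemma card_union_PiE:
  assumes "p \<in> PiE J \<Delta>"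
  shows "card (\<Union>j\<in>J. p j) = (\<Sum>j\<in>J. card (p j))"
proof (rule card_UN_disjoint[OF finite_index])
  show "\<forall>j\<in>J. finite (p j)" using assms finite_faces by (auto simp: PiE_iff)
  show "\<forall>i\<in>J. \<forall>j\<in>J. i \<noteq> j \<longrightarrow> p i \<inter> p j = {}"
    using PiE_faces_disjoint[OF assms] by simp
qed

lemma cplx_rank_cplx_join: "cplx_rank (cplx_join J \<Delta>) = (\<Sum>j\<in>J. cplx_rank (\<Delta> j))"
  unfolding cplx_rank_def cplx_join_def
proof (rule Max_eqI)
  show "finite (card ` (\<lambda>p. \<Union>j\<in>J. p j) ` PiE J \<Delta>)"
    using finite_index finite_cplx by (simp add: finite_PiE)
  show "k \<le> (\<Sum>j\<in>J. Max (card ` \<Delta> j))" if "k \<in> card ` (\<lambda>p. \<Union>j\<in>J. p j) ` PiE J \<Delta>" for k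
    using that finite_cplx card_union_PiE by (auto simp: PiE_iff intro!: sum_mono)
  obtain p where p: "p \<in> PiE J \<Delta>" "\<forall>j\<in>J. card (p j) = Max (card ` \<Delta> j)"
  proof -
    have "Max (card ` \<Delta> j) \<in> card ` \<Delta> j" if "j \<in> J" for j
      using finite_cplx[OF that] nonempty_cplx[OF that] by simp
    then have "\<forall>j\<in>J. \<exists>F\<in>\<Delta> j. card F = Max (card ` \<Delta> j)" by (metis imageE)
    then obtain f where "\<forall>j\<in>J. f j \<in> \<Delta> j \<and> card (f j) = Max (card ` \<Delta> j)" by metis
    then show ?thesis using that[of "restrict f J"] by auto
  qed
  then show "(\<Sum>j\<in>J. Max (card ` \<Delta> j)) \<in> card ` (\<lambda>p. \<Union>j\<in>J. p j) ` PiE J \<Delta>"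
    using card_union_PiE[OF p(1)] by (intro image_eqI[where x="\<Union>j\<in>J. p j"]) auto
qed

lemma hpoly_cplx_join: "hpoly (cplx_join J \<Delta>) = (\<Prod>j\<in>J. hpoly (\<Delta> j))"
proof -
  let ?U = "\<lambda>p. \<Union>j\<in>J. p j"
  let ?term = "\<lambda>r F. X ^ card F * (1 - X) ^ (r - card F)"
  have inj: "inj_on ?U (PiE J \<Delta>)"
  proof (rule inj_onI)
    fix p q assume p: "p \<in> PiE J \<Delta>" and q: "q \<in> PiE J \<Delta>" and eq: "?U p = ?U q"
    show "p = q"
    proof (rule PiE_ext[OF p q])
      fix j assume "j \<in> J"
      then show "p j = q j" using union_PiE_Int_vertices[OF p] union_PiE_Int_vertices[OF q] eq by metis
    qed
  qed
  have "hpoly (cplx_join J \<Delta>) = (\<Sum>p\<in>PiE J \<Delta>. ?term (\<Sum>j\<in>J. cplx_rank (\<Delta> j)) (?U p))"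
    unfolding hpoly_eq_hsum hsum_def cplx_rank_cplx_join unfolding cplx_join_def
    using sum.reindex[OF inj] by simp
  also have "\<dots> = (\<Sum>p\<in>PiE J \<Delta>. \<Prod>j\<in>J. ?term (cplx_rank (\<Delta> j)) (p j))"
  proof (intro sum.cong refl)
    fix p assume p: "p \<in> PiE J \<Delta>"
    have "card (p j) \<le> cplx_rank (\<Delta> j)" if "j \<in> J" for j
      using p that finite_cplx unfolding cplx_rank_def by (auto simp: PiE_iff)
    then have "(\<Sum>j\<in>J. cplx_rank (\<Delta> j)) - card (?U p) = (\<Sum>j\<in>J. cplx_rank (\<Delta> j) - card (p j))"
      using card_union_PiE[OF p] by (simp add: sum_subtractf_nat)
    then show "?term (\<Sum>j\<in>J. cplx_rank (\<Delta> j)) (?U p) = (\<Prod>j\<in>J. ?term (cplx_rank (\<Delta> j)) (p j))"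
      using card_union_PiE[OF p] by (simp add: power_sum prod.distrib)
  qed
  also have "\<dots> = (\<Prod>j\<in>J. hpoly (\<Delta> j))"
    unfolding hpoly_eq_hsum hsum_def
    using prod_sum_PiE[OF finite_index, of \<Delta> "\<lambda>j F. ?term (cplx_rank (\<Delta> j)) F"] finite_cplx by simp
  finally show ?thesis .
qed

end

section \<open>The link of a chain in the barycentric subdivision\<close>

text \<open>The list S holds S_1 \<subset> ... \<subset> S_k indexed from 0, so lower_end i is S_i (with S_0 = {}) and
  gap F i is the open interval (S_i, S_(i+1)), or the half-open interval (S_k, F] when i = k.\<close>

context
  fixes S :: "'a set list"
  assumes sorted: "sorted_wrt (\<subset>) S" and hd_nonempty: "S \<noteq> [] \<longrightarrow> hd S \<noteq> {}"
begin

definition lower_end :: "nat \<Rightarrow> 'a set" where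
  "lower_end i = (if i = 0 then {} else S ! (i - 1))"

definition gap :: "'a set \<Rightarrow> nat \<Rightarrow> 'a set set" where
  "gap F i = (if i < length S then {T. lower_end i \<subset> T \<and> T \<subset> S ! i}
              else {T. lower_end (length S) \<subset> T \<and> T \<subseteq> F})"

lemma nth_psubset_nth: "i < j \<Longrightarrow> j < length S \<Longrightarrow> S ! i \<subset> S ! j"
  using sorted_wrt_nth_less[OF sorted] by blast

lemma nth_subset_nth: "i \<le> j \<Longrightarrow> j < length S \<Longrightarrow> S ! i \<subseteq> S ! j"
  using nth_psubset_nth[of i j] by (cases "i = j") auto

lemma lower_end_psubset_nth: "i < length S \<Longrightarrow> lower_end i \<subset> S ! i"
  using hd_nonempty nth_psubset_nth[of "i - 1" i]
  by (cases i) (auto simp: lower_end_def hd_conv_nth)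

lemma nth_subset_lower_end: "i < j \<Longrightarrow> j \<le> length S \<Longrightarrow> S ! i \<subseteq> lower_end j"
  unfolding lower_end_def using nth_subset_nth by auto

lemma is_chain_set: "is_chain (set S)"
  unfolding is_chain_def
proof (intro ballI)
  fix A B assume "A \<in> set S" "B \<in> set S"
  then obtain i j where "i < length S" "j < length S" "A = S ! i" "B = S ! j" by (auto simp: in_set_conv_nth)
  then show "A \<subseteq> B \<or> B \<subseteq> A" using nth_subset_nth[of i j] nth_subset_nth[of j i] by (cases "i \<le> j") auto
qed

lemma lower_end_psubset_gap: "j \<le> length S \<Longrightarrow> T \<in> gap F j \<Longrightarrow> lower_end j \<subset> T"
  by (auto simp: gap_def split: if_splits)

lemma gap_psubset_nth: "j < length S \<Longrightarrow> T \<in> gap F j \<Longrightarrow> j \<le> m \<Longrightarrow> m < length S \<Longrightarrow> T \<subset> S ! m"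
  using nth_subset_nth[of j m] by (auto simp: gap_def)

lemma gap_less:
  assumes "i < j" "j \<le> length S" "T \<in> gap F i" "T' \<in> gap F j"
  shows "T \<subset> T'"
  using gap_psubset_nth[of i T F i] nth_subset_lower_end[of i j] lower_end_psubset_gap[of j T' F] assms
  by auto

lemma gaps_disjoint: "i \<noteq> j \<Longrightarrow> i \<le> length S \<Longrightarrow> j \<le> length S \<Longrightarrow> gap F i \<inter> gap F j = {}"
  by (metis disjoint_iff gap_less linorder_neqE_nat order_less_irrefl)

lemma gap_comparable_nth:
  assumes "j \<le> length S" "T \<in> gap F j" "m < length S"
  shows "T \<subset> S ! m \<or> S ! m \<subset> T"
proof (cases "m < j")
  case True
  then show ?thesis using nth_subset_lower_end[OF True assms(1)] lower_end_psubset_gap[OF assms(1,2)] by blast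
next
  case False
  then show ?thesis using gap_psubset_nth[of j T F m] assms by simp
qed

lemma gap_subset:
  assumes "j \<le> length S" "lower_end (length S) \<subseteq> F" "T \<in> gap F j"
  shows "T \<subseteq> F" "T \<noteq> {}"
proof -
  show "T \<noteq> {}" using lower_end_psubset_gap[OF assms(1,3)] by blast
  show "T \<subseteq> F"
  proof (cases "j < length S")
    case True
    then show ?thesis using assms gap_psubset_nth[of j T F "length S - 1"]
        nth_subset_lower_end[of "length S - 1" "length S"] by fastforce
  qed (use assms in \<open>simp add: gap_def\<close>)
qed

lemma mem_gap:
  assumes "T \<noteq> {}" "T \<subseteq> F" "T \<notin> set S" and comparable: "\<forall>i<length S. T \<subseteq> S ! i \<or> S ! i \<subseteq> T"
  shows "\<exists>j\<le>length S. T \<in> gap F j"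
proof (cases "\<exists>i<length S. T \<subset> S ! i")
  case True
  define i where "i = (LEAST i. i < length S \<and> T \<subset> S ! i)"
  have i: "i < length S" "T \<subset> S ! i" using LeastI_ex[OF True] unfolding i_def by auto
  have "lower_end i \<subset> T"
  proof (cases i)
    case (Suc i')
    have "\<not> T \<subset> S ! i'" using not_less_Least[of i' "\<lambda>i. i < length S \<and> T \<subset> S ! i"] Suc i
      unfolding i_def by auto
    moreover have "T \<subseteq> S ! i' \<or> S ! i' \<subseteq> T" "T \<noteq> S ! i'"
      using comparable assms(3) Suc i by auto
    ultimately show ?thesis using Suc by (auto simp: lower_end_def)
  qed (use assms(1) in \<open>auto simp: lower_end_def\<close>)
  then show ?thesis using i by (auto simp: gap_def)
next
  case False
  have "lower_end (length S) \<subset> T"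
  proof (cases "length S")
    case 0
    then show ?thesis unfolding lower_end_def using assms(1) by auto
  next
    case (Suc k)
    then show ?thesis using comparable False assms(3) by (auto simp: lower_end_def)
  qed
  then show ?thesis using assms(2) by (auto simp: gap_def)
qed

lemma gap_not_in_set: "j \<le> length S \<Longrightarrow> T \<in> gap F j \<Longrightarrow> T \<notin> set S"
  using gap_comparable_nth by (fastforce simp: in_set_conv_nth)

lemma nth_subset_top:
  assumes "lower_end (length S) \<subseteq> F" "i < length S"
  shows "S ! i \<subseteq> F" "S ! i \<noteq> {}"
  using nth_subset_lower_end[of i "length S"] lower_end_psubset_nth[of i] assms by auto

lemma set_gap_comparable:
  assumes "A \<in> set S" "j \<le> length S" "B \<in> gap F j"
  shows "A \<subseteq> B \<or> B \<subseteq> A"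
proof -
  obtain m where "m < length S" "A = S ! m" using assms(1) by (auto simp: in_set_conv_nth)
  then show ?thesis using gap_comparable_nth[OF assms(2,3)] by blast
qed

lemma gaps_comparable:
  assumes "i \<le> length S" "j \<le> length S" "i \<noteq> j" "A \<in> gap F i" "B \<in> gap F j"
  shows "A \<subseteq> B \<or> B \<subseteq> A"
  using assms gap_less[of i j A F B] gap_less[of j i B F A] by (cases i j rule: linorder_cases) auto

lemma is_chain_set_Un_gaps:
  assumes p: "\<And>j. j \<le> length S \<Longrightarrow> p j \<subseteq> gap F j \<and> is_chain (p j)"
  shows "is_chain (set S \<union> (\<Union>j\<le>length S. p j))"
  unfolding is_chain_def
proof (intro ballI)
  fix A B assume A: "A \<in> set S \<union> (\<Union>j\<le>length S. p j)" and B: "B \<in> set S \<union> (\<Union>j\<le>length S. p j)"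
  consider "A \<in> set S" "B \<in> set S" | i where "A \<in> set S" "i \<le> length S" "B \<in> p i"
    | i where "i \<le> length S" "A \<in> p i" "B \<in> set S"
    | i j where "i \<le> length S" "A \<in> p i" "j \<le> length S" "B \<in> p j"
    using A B by blast
  then show "A \<subseteq> B \<or> B \<subseteq> A"
  proof cases
    case 1
    then show ?thesis using is_chain_set unfolding is_chain_def by blast
  next
    case (2 i)
    then show ?thesis using set_gap_comparable[of A i B F] p[of i] by blast
  next
    case (3 i)
    then show ?thesis using set_gap_comparable[of B i A F] p[of i] by blast
  next
    case (4 i j)
    then show ?thesis
      using gaps_comparable[of i j A F B] p[of i] p[of j] unfolding is_chain_def by (cases "i = j") auto
  qed
qed

lemma link_sd_subset_join:
  assumes "lower_end (length S) \<subseteq> F"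
  shows "link (sd F) (set S) \<subseteq> cplx_join {..length S} (\<lambda>j. order_complex (gap F j))"
proof
  fix D assume "D \<in> link (sd F) (set S)"
  then obtain G where G: "G \<in> sd F" "set S \<subseteq> G" "D = G - set S" unfolding link_def by auto
  have G_sub: "G \<subseteq> Pow F - {{}}" and G_chain: "is_chain G" using sd_memD[OF G(1)] by auto
  define p where "p = restrict (\<lambda>j. D \<inter> gap F j) {..length S}"
  have p: "p \<in> PiE {..length S} (\<lambda>j. order_complex (gap F j))"
    using G_chain G(3) unfolding p_def order_complex_def is_chain_def by auto
  have union: "(\<Union>j\<le>length S. p j) = D"
  proof (intro equalityI subsetI)
    fix T assume T: "T \<in> D"
    have T_G: "T \<in> G" "T \<notin> set S" using T G(3) by auto
    then have T_F: "T \<noteq> {}" "T \<subseteq> F" using G_sub by auto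
    have comparable: "\<forall>i<length S. T \<subseteq> S ! i \<or> S ! i \<subseteq> T"
    proof (intro allI impI)
      fix i assume "i < length S"
      then have "S ! i \<in> G" using G(2) by auto
      then show "T \<subseteq> S ! i \<or> S ! i \<subseteq> T" using T_G(1) G_chain unfolding is_chain_def by blast
    qed
    obtain j where "j \<le> length S" "T \<in> gap F j"
      using mem_gap[OF T_F T_G(2) comparable] by blast
    then show "T \<in> (\<Union>j\<le>length S. p j)" using T unfolding p_def by auto
  qed (auto simp: p_def)
  show "D \<in> cplx_join {..length S} (\<lambda>j. order_complex (gap F j))"
    unfolding cplx_join_def union[symmetric] using p by (rule imageI)
qed

lemma join_subset_link_sd:
  assumes F: "lower_end (length S) \<subseteq> F"
  shows "cplx_join {..length S} (\<lambda>j. order_complex (gap F j)) \<subseteq> link (sd F) (set S)"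
proof
  fix D assume "D \<in> cplx_join {..length S} (\<lambda>j. order_complex (gap F j))"
  then obtain p where p: "p \<in> PiE {..length S} (\<lambda>j. order_complex (gap F j))"
    and D: "D = (\<Union>j\<le>length S. p j)" unfolding cplx_join_def by auto
  have pj: "p j \<subseteq> gap F j \<and> is_chain (p j)" if "j \<le> length S" for j
    using p that unfolding order_complex_def PiE_iff by auto
  have in_gap: "\<exists>j\<le>length S. T \<in> gap F j" if "T \<in> D" for T
    using that pj unfolding D by blast
  have "set S \<subseteq> Pow F - {{}}"
    unfolding set_conv_nth using nth_subset_top[OF F] by blast
  moreover have "D \<subseteq> Pow F - {{}}"
    using in_gap gap_subset[OF _ F] by blast
  moreover have "is_chain (set S \<union> D)"
    unfolding D using is_chain_set_Un_gaps[OF pj] .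
  ultimately have "set S \<union> D \<in> sd F" unfolding sd_def by blast
  moreover have "D = (set S \<union> D) - set S"
    using in_gap gap_not_in_set by blast
  ultimately show "D \<in> link (sd F) (set S)" unfolding link_def by blast
qed

lemma link_sd_eq_join:
  "lower_end (length S) \<subseteq> F \<Longrightarrow> link (sd F) (set S) = cplx_join {..length S} (\<lambda>j. order_complex (gap F j))"
  by (intro equalityI link_sd_subset_join join_subset_link_sd)

lemma hpoly_order_complex_gap:
  assumes fin: "finite F" and F: "lower_end (length S) \<subseteq> F" and j: "j \<le> length S"
  shows "hpoly (order_complex (gap F j)) = eulerian_rec (card ((if j < length S then S ! j else F) - lower_end j))"
proof (cases "j < length S")
  case True
  have "finite (S ! j)" using nth_subset_top[OF F True] fin by (simp add: finite_subset)
  then show ?thesis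
    using open_interval_chains(1)[OF lower_end_psubset_nth[OF True]] True by (simp add: gap_def)
next
  case False
  then show ?thesis using interval_chains(1)[OF F fin] j by (simp add: gap_def)
qed

lemma hpoly_link_sd:
  assumes fin: "finite F" and F: "lower_end (length S) \<subseteq> F"
  shows "hpoly (link (sd F) (set S)) =
    (\<Prod>i<length S. eulerian_rec (card (S ! i - lower_end i))) * eulerian_rec (card (F - lower_end (length S)))"
proof -
  let ?k = "length S"
  have gap_Pow: "gap F j \<subseteq> Pow F" if "j \<le> ?k" for j
    using gap_subset[OF that F] by blast
  have finite_gap: "finite (gap F j)" if "j \<le> ?k" for j
    using finite_subset[OF gap_Pow[OF that]] fin by simp
  have "hpoly (link (sd F) (set S)) = (\<Prod>j\<le>?k. hpoly (order_complex (gap F j)))"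
    unfolding link_sd_eq_join[OF F]
  proof (rule hpoly_cplx_join)
    show "finite (order_complex (gap F j))" if "j \<in> {..?k}" for j
      using finite_gap that by (simp add: finite_order_complex)
    show "order_complex (gap F j) \<noteq> {}" for j
      using empty_in_order_complex by blast
    show "finite D" if "j \<in> {..?k}" "D \<in> order_complex (gap F j)" for j D
      using that finite_gap unfolding order_complex_def by (auto intro: finite_subset)
    show "disjoint_family_on (\<lambda>j. \<Union>(order_complex (gap F j))) {..?k}"
      unfolding Union_order_complex disjoint_family_on_def using gaps_disjoint by auto
  qed simp
  also have "\<dots> = (\<Prod>j\<le>?k. eulerian_rec (card ((if j < ?k then S ! j else F) - lower_end j)))"
    using hpoly_order_complex_gap[OF fin F] by (intro prod.cong) auto
  also have "\<dots> = (\<Prod>i<?k. eulerian_rec (card (S ! i - lower_end i))) * eulerian_rec (card (F - lower_end ?k))"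
    unfolding atMost_Suc lessThan_Suc_atMost[symmetric] prod.lessThan_Suc by simp
  finally show ?thesis .
qed

end

section \<open>The relative local h-polynomial\<close>

lemma bary_carrier_eq:
  assumes "M \<in> G" "\<forall>A\<in>G. A \<subseteq> M"
  shows "bary_carrier G = M"
proof -
  have "(THE M. M \<in> G \<and> (\<forall>A\<in>G. A \<subseteq> M)) = M"
    using assms by (intro the_equality) auto
  then show ?thesis using assms(1) unfolding bary_carrier_def by auto
qed

lemma bary_carrier_subset_iff:
  assumes "finite G" "is_chain G"
  shows "bary_carrier G \<subseteq> F \<longleftrightarrow> (\<forall>T\<in>G. T \<subseteq> F)"
proof (cases "G = {}")
  case False
  then obtain M where "M \<in> G" "\<forall>T\<in>G. T \<subseteq> M" using finite_chain_has_greatest assms by blast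
  then show ?thesis using bary_carrier_eq[of M G] by auto
qed (simp add: bary_carrier_def)

lemma restr_sd:
  assumes fin: "finite V" and FV: "F \<subseteq> V"
  shows "restr bary_carrier (sd V) F = sd F"
proof -
  have "bary_carrier G \<subseteq> F \<longleftrightarrow> G \<in> sd F" if "G \<in> sd V" for G
    using that sd_face_finite_card_le(1)[OF fin that] bary_carrier_subset_iff[of G F]
    unfolding sd_def by auto
  moreover have "sd F \<subseteq> sd V" using FV unfolding sd_def by auto
  ultimately show ?thesis unfolding restr_def by auto
qed

lemma bary_carrier_set:
  assumes "sorted_wrt (\<subset>) S" "S \<noteq> [] \<longrightarrow> hd S \<noteq> {}"
  shows "bary_carrier (set S) = (if S = [] then {} else last S)"
proof (cases "S = []")
  case False
  have "S ! i \<subseteq> last S" if "i < length S" for i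
    using nth_subset_nth[OF assms, of i "length S - 1"] that False by (simp add: last_conv_nth)
  then have "\<forall>A\<in>set S. A \<subseteq> last S" by (metis in_set_conv_nth)
  then show ?thesis
    using bary_carrier_eq[of "last S" "set S"] False by simp
qed (simp add: bary_carrier_def)

lemma alternating_sum_upper_interval:
  assumes fin: "finite V" and PV: "P \<subseteq> V"
  shows "(\<Sum>F\<in>{F. P \<subseteq> F \<and> F \<subseteq> V}. (-1) ^ (card V - card F) * eulerian_rec (card (F - P)))
    = derange_poly (card (V - P))"
proof -
  have bij: "bij_betw (\<lambda>W. W \<union> P) (Pow (V - P)) {F. P \<subseteq> F \<and> F \<subseteq> V}"
    by (rule bij_betwI[where g="\<lambda>F. F - P"]) (use PV in auto)
  have "card V - card (W \<union> P) = card (V - P) - card W" if "W \<in> Pow (V - P)" for W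
  proof -
    have "finite W" "finite P" "W \<inter> P = {}" using that PV fin by (auto intro: finite_subset)
    then show ?thesis
      using PV fin by (simp add: card_Un_disjoint card_Diff_subset)
  qed
  moreover have "W \<union> P - P = W" if "W \<in> Pow (V - P)" for W using that by auto
  ultimately show ?thesis
    unfolding sum.reindex_bij_betw[OF bij, symmetric] derange_poly_eq_alternating_sum[OF finite_Diff[OF fin]]
    by (intro sum.cong) auto
qed

lemma hpoly_link_restr_sd:
  assumes "sorted_wrt (\<subset>) S" "S \<noteq> [] \<longrightarrow> hd S \<noteq> {}"
    and "finite V" "lower_end S (length S) \<subseteq> F" "F \<subseteq> V"
  shows "hpoly (link (restr bary_carrier (sd V) F) (set S)) =
    (\<Prod>i<length S. eulerian_rec (card (S ! i - lower_end S i))) * eulerian_rec (card (F - lower_end S (length S)))"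
  using restr_sd[OF assms(3,5)] hpoly_link_sd[OF assms(1,2) _ assms(4)] finite_subset[OF assms(5,3)] by simp

theorem mainTheorem7:
  fixes V :: "'a set" and S :: "'a set list" and n :: nat
  assumes "finite V" and "card V = n"
    and "sorted_wrt (\<subset>) S"
    and "S \<noteq> [] \<longrightarrow> hd S \<noteq> {} \<and> last S \<subseteq> V"
  shows "rel_local_h bary_carrier V (sd V) (set S) =
    derange_poly (card (V - (if S = [] then {} else last S))) *
    (\<Prod>i<length S. eulerian_poly (card (S ! i - (if i = 0 then {} else S ! (i - 1)))))"
proof -
  have hd_nonempty: "S \<noteq> [] \<longrightarrow> hd S \<noteq> {}" using assms(4) by simp
  define P where "P = lower_end S (length S)"
  have P: "P = (if S = [] then {} else last S)" and PV: "P \<subseteq> V"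
    using assms(4) unfolding P_def lower_end_def[OF assms(3) hd_nonempty] by (simp_all add: last_conv_nth)
  define A where "A = (\<Prod>i<length S. eulerian_rec (card (S ! i - lower_end S i)))"
  have "rel_local_h bary_carrier V (sd V) (set S)
      = (\<Sum>F\<in>{F. P \<subseteq> F \<and> F \<subseteq> V}. (-1) ^ (card V - card F) * (A * eulerian_rec (card (F - P))))"
    unfolding rel_local_h_def bary_carrier_set[OF assms(3) hd_nonempty] P[symmetric]
    using hpoly_link_restr_sd[OF assms(3) hd_nonempty assms(1)] by (intro sum.cong) (auto simp: A_def P_def)
  also have "\<dots> = A * derange_poly (card (V - P))"
    unfolding alternating_sum_upper_interval[OF assms(1) PV, symmetric]
    by (simp add: sum_distrib_left algebra_simps)
  also have "A = (\<Prod>i<length S. eulerian_poly (card (S ! i - (if i = 0 then {} else S ! (i - 1)))))"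
    unfolding A_def eulerian_poly_eq_eulerian_rec lower_end_def[OF assms(3) hd_nonempty] ..
  finally show ?thesis using P by (simp add: mult.commute)
qed

end
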